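(* Let $k\ge3$, $1\le s\le k$, $r\le\min\{n_1,\dots,n_s\}$, $\mathcal A\in\mathbb R^{n_1}\otimes\cdots\otimes\mathbb R^{n_k}$ nonzero, and let $\{U_{[p]}\}$ be generated by the iAPD-ALS algorithm (described in the context). Then the number of columns of the matrices $U^{(i)}_{[p]}$ is eventually constant, equal to some positive integer $t\le r$, and there exists $N_0$ such that $f(U_{[p]})$ is nondecreasing in $p$ for all $p\ge N_0$.
   Context: Notation. $\mathrm V(m,n)=\{U\in\mathbb R^{n\times m}:U^{\mathsf T}U=I_m\}$; $\mathrm B(m,n)$: $n\times m$ real matrices with unit columns. $\mathcal A\tau(\mathbf u_1,\dots,\mathbf u_k)=\langle\mathcal A,\mathbf u_1\otimes\cdots\otimes\mathbf u_k\rangle$; $\mathcal A\tau_i(\mathbf u_1,\dots,\mathbf u_k)\in\mathbb R^{n_i}$ is the contraction of $\mathcal A$ with all $\mathbf u_l$, $l\ne i$. For $U=(U^{(1)},\dots,U^{(k)})$ with columns $\mathbf u^{(i)}_j$, $j\le t$: $f(U)=\sum_j\mathcal A\tau(\mathbf u^{(1)}_j,\dots,\mathbf u^{(k)}_j)^2$. $\operatorname{Polar}(X)$ is the set of $Q\in\mathrm V(m,n)$ maximizing $\langle Q,X\rangle$. iAPD-ALS algorithm (input $\mathcal A$, $r$, $\epsilon>0$). Choose $U_{[0]}\in\mathrm V(r,n_1)\times\cdots\times\mathrm V(r,n_s)\times\mathrm B(r,n_{s+1})\times\cdots\times\mathrm B(r,n_k)$ with $f(U_{[0]})>0$ and $\kappa\in(0,\sqrt{f(U_{[0]})/r})$.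 For $p=1,2,\dots$ ($t$ = current number of columns, $\mathbf u^{(i)}_{j,[q]}$ = $j$-th column of $U^{(i)}_{[q]}$), let $\mathbf x^i_{j,[p]}=(\mathbf u^{(1)}_{j,[p]},\dots,\mathbf u^{(i-1)}_{j,[p]},\mathbf u^{(i)}_{j,[p-1]},\dots,\mathbf u^{(k)}_{j,[p-1]})$, $\lambda^{i-1}_{j,[p]}=\mathcal A\tau(\mathbf x^i_{j,[p]})$, $\Lambda^{(i)}_{[p]}=\operatorname{diag}(\lambda^{i-1}_{j,[p]})_j$, $V^{(i)}_{[p]}=[\mathcal A\tau_i(\mathbf x^i_{j,[p]})]_j$. (1) For $i=1,\dots,s$ in turn pick $U^{(i)}_{[p]}\in\operatorname{Polar}(V^{(i)}_{[p]}\Lambda^{(i)}_{[p]})$, and if the smallest eigenvalue of $(U^{(i)}_{[p]})^{\mathsf T}V^{(i)}_{[p]}\Lambda^{(i)}_{[p]}$ is $<\epsilon$, instead pick $U^{(i)}_{[p]}\in\operatorname{Polar}(V^{(i)}_{[p]}\Lambda^{(i)}_{[p]}+\epsilon U^{(i)}_{[p-1]})$. (2) Truncation: with $J=\{j:|((U^{(s)}_{[p]})^{\mathsf T}V^{(s)}_{[p]})_{jj}|<\kappa\}$, delete columns in $J$ from $U^{(1)}_{[p]},\dots,U^{(s)}_{[p]}$ and $U^{(s+1)}_{[p-1]},\dots,U^{(k)}_{[p-1]}$ and set $t:=t-|J|$. (3) For $i=s+1,\dots,k$ in turn, $\mathbf u^{(i)}_{j,[p]}=\operatorname{sgn}(\lambda^{i-1}_{j,[p]})\mathcal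 A\tau_i(\mathbf x^i_{j,[p]})/\|\mathcal A\tau_i(\mathbf x^i_{j,[p]})\|$. Set $U_{[p]}=(U^{(1)}_{[p]},\dots,U^{(k)}_{[p]})$ and iterate indefinitely. *)

theory Defs
  imports Complex_Main "HOL-Library.FuncSet"
begin

text \<open>Modes are indexed 0..<k (mode i here is mode i+1 of the paper),
  the first s modes (i < s) carry Stiefel factors, modes s..<k carry unit-column factors.
  A tensor is a function on multi-indices; only indices in the box
  idx i < n i (i < k) matter. A vector of R^m is a function nat => real, of which
  only the entries 0..<m matter. A factor matrix with columns labelled by a finite
  set T of labels is a function Q :: nat => nat => real, Q j l = entry in row l of
  column j. Column deletion is modelled by shrinking the label set.\<close>

definition idxs :: "nat \<Rightarrow> (nat \<Rightarrow> nat) \<Rightarrow> (nat \<Rightarrow> nat) set" where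
  "idxs k n = Pi\<^sub>E {..<k} (\<lambda>i. {..<n i})"

definition contr :: "nat \<Rightarrow> (nat \<Rightarrow> nat) \<Rightarrow> ((nat \<Rightarrow> nat) \<Rightarrow> real)
     \<Rightarrow> (nat \<Rightarrow> nat \<Rightarrow> real) \<Rightarrow> real" where
  "contr k n A u = (\<Sum>idx\<in>idxs k n. A idx * (\<Prod>m<k. u m (idx m)))"

definition contr_i :: "nat \<Rightarrow> (nat \<Rightarrow> nat) \<Rightarrow> ((nat \<Rightarrow> nat) \<Rightarrow> real)
     \<Rightarrow> nat \<Rightarrow> (nat \<Rightarrow> nat \<Rightarrow> real) \<Rightarrow> nat \<Rightarrow> real" where
  "contr_i k n A i u l =
     (if l < n i then (\<Sum>idx\<in>{idx\<in>idxs k n. idx i = l}. A idx * (\<Prod>m\<in>{..<k}-{i}. u m (idx m)))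
      else 0)"

definition vnorm :: "nat \<Rightarrow> (nat \<Rightarrow> real) \<Rightarrow> real" where
  "vnorm m v = sqrt (\<Sum>l<m. (v l)\<^sup>2)"

definition stiefel :: "nat \<Rightarrow> nat set \<Rightarrow> (nat \<Rightarrow> nat \<Rightarrow> real) \<Rightarrow> bool" where
  "stiefel m T Q \<longleftrightarrow> (\<forall>j\<in>T. \<forall>j'\<in>T. (\<Sum>l<m. Q j l * Q j' l) = (if j = j' then 1 else 0))"

definition unitcols :: "nat \<Rightarrow> nat set \<Rightarrow> (nat \<Rightarrow> nat \<Rightarrow> real) \<Rightarrow> bool" where
  "unitcols m T Q \<longleftrightarrow> (\<forall>j\<in>T. (\<Sum>l<m. (Q j l)\<^sup>2) = 1)"

definition frob :: "nat \<Rightarrow> nat set \<Rightarrow> (nat \<Rightarrow> nat \<Rightarrow> real) \<Rightarrow> (nat \<Rightarrow> nat \<Rightarrow> real) \<Rightarrow> real" where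
  "frob m T Q X = (\<Sum>j\<in>T. \<Sum>l<m. Q j l * X j l)"

definition Polar :: "nat \<Rightarrow> nat set \<Rightarrow> (nat \<Rightarrow> nat \<Rightarrow> real) \<Rightarrow> (nat \<Rightarrow> nat \<Rightarrow> real) set" where
  "Polar m T X = {Q. stiefel m T Q \<and> (\<forall>Q'. stiefel m T Q' \<longrightarrow> frob m T Q' X \<le> frob m T Q X)}"

definition gram :: "nat \<Rightarrow> (nat \<Rightarrow> nat \<Rightarrow> real) \<Rightarrow> (nat \<Rightarrow> nat \<Rightarrow> real) \<Rightarrow> nat \<Rightarrow> nat \<Rightarrow> real" where
  "gram m Q X = (\<lambda>j j'. \<Sum>l<m. Q j l * X j' l)"

definition is_eig :: "nat set \<Rightarrow> (nat \<Rightarrow> nat \<Rightarrow> real) \<Rightarrow> real \<Rightarrow> bool" where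
  "is_eig T M \<mu> \<longleftrightarrow> (\<exists>x. (\<exists>j\<in>T. x j \<noteq> 0) \<and> (\<forall>j\<in>T. (\<Sum>j'\<in>T. M j j' * x j') = \<mu> * x j))"

definition min_eig :: "nat set \<Rightarrow> (nat \<Rightarrow> nat \<Rightarrow> real) \<Rightarrow> real" where
  "min_eig T M = Min {\<mu>. is_eig T M \<mu>}"

definition fobj :: "nat \<Rightarrow> (nat \<Rightarrow> nat) \<Rightarrow> ((nat \<Rightarrow> nat) \<Rightarrow> real)
     \<Rightarrow> nat set \<Rightarrow> (nat \<Rightarrow> nat \<Rightarrow> nat \<Rightarrow> real) \<Rightarrow> real" where
  "fobj k n A T U = (\<Sum>j\<in>T. (contr k n A (\<lambda>m. U m j))\<^sup>2)"

text \<open>Iterates: U p i j l (iteration p, mode i, column label j, row l); S p the active labels.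
  x^i_{j,[p]}: modes m < i from iteration p, modes m >= i from iteration p-1.\<close>
definition xv :: "(nat \<Rightarrow> nat \<Rightarrow> nat \<Rightarrow> nat \<Rightarrow> real) \<Rightarrow> nat \<Rightarrow> nat \<Rightarrow> nat \<Rightarrow> nat \<Rightarrow> nat \<Rightarrow> real" where
  "xv U p i j = (\<lambda>m. if m < i then U p m j else U (p - 1) m j)"

definition lam where
  "lam k n A U p i j = contr k n A (xv U p i j)"

definition Vcol where
  "Vcol k n A U p i j = contr_i k n A i (xv U p i j)"

definition Xmat where
  "Xmat k n A U p i = (\<lambda>j l. Vcol k n A U p i j l * lam k n A U p i j)"

definition iAPD_ALS ::
  "nat \<Rightarrow> nat \<Rightarrow> (nat \<Rightarrow> nat) \<Rightarrow> ((nat \<Rightarrow> nat) \<Rightarrow> real) \<Rightarrow> nat \<Rightarrow> real \<Rightarrow> real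
   \<Rightarrow> (nat \<Rightarrow> nat set) \<Rightarrow> (nat \<Rightarrow> nat \<Rightarrow> nat \<Rightarrow> nat \<Rightarrow> real) \<Rightarrow> bool" where
  "iAPD_ALS k s n A r \<epsilon> \<kappa> S U \<longleftrightarrow>
     \<comment> \<open>initialization\<close>
     S 0 = {..<r} \<and>
     (\<forall>i<s. stiefel (n i) {..<r} (U 0 i)) \<and>
     (\<forall>i. s \<le> i \<and> i < k \<longrightarrow> unitcols (n i) {..<r} (U 0 i)) \<and>
     fobj k n A (S 0) (U 0) > 0 \<and>
     0 < \<kappa> \<and> \<kappa> < sqrt (fobj k n A (S 0) (U 0) / real r) \<and>
     \<comment> \<open>iterations p = 1, 2, ...\<close>
     (\<forall>p\<ge>1.
        \<comment> \<open>(1) polar decomposition steps for modes i < s\<close>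
        (\<forall>i<s.
           (U p i \<in> Polar (n i) (S (p - 1)) (Xmat k n A U p i) \<and>
            \<not> min_eig (S (p - 1)) (gram (n i) (U p i) (Xmat k n A U p i)) < \<epsilon>)
         \<or> (\<exists>Q\<in>Polar (n i) (S (p - 1)) (Xmat k n A U p i).
              min_eig (S (p - 1)) (gram (n i) Q (Xmat k n A U p i)) < \<epsilon> \<and>
              U p i \<in> Polar (n i) (S (p - 1))
                 (\<lambda>j l. Xmat k n A U p i j l + \<epsilon> * U (p - 1) i j l))) \<and>
        \<comment> \<open>(2) truncation, using the last Stiefel mode s-1\<close>
        S p = {j\<in>S (p - 1).
                 \<not> \<bar>\<Sum>l<n (s - 1). U p (s - 1) j l * Vcol k n A U p (s - 1) j l\<bar> < \<kappa>} \<and>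
        \<comment> \<open>(3) normalized power steps for modes s..<k\<close>
        (\<forall>i. s \<le> i \<and> i < k \<longrightarrow>
           (\<forall>j\<in>S p. \<forall>l<n i.
              U p i j l = sgn (lam k n A U p i j) * Vcol k n A U p i j l
                           / vnorm (n i) (Vcol k n A U p i j))))"

end

theory Submission
  imports Defs "HOL-Analysis.Convex"
begin

text \<open>
  Within iteration p, write \<lambda>(i,j) for the contraction of A with the j-th columns of the
  factors after i of the k factor updates, so that \<lambda>(0,j) and \<lambda>(k,j) are the terms of
  f(U_[p-1]) and f(U_[p]). Both \<lambda>(i-1,j) and \<lambda>(i,j) are inner products with the same
  vector v(i,j) = A\<tau>_i(x(i,j)), taken with the old and with the new i-th column. A polar step
  maximises \<langle>Q, V \<Lambda>\<rangle> = \<Sum>_j \<lambda>(i-1,j) \<langle>q_j, v(i,j)\<rangle>, so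
  \<Sum>_j \<lambda>(i-1,j)^2 \<le> \<Sum>_j \<lambda>(i-1,j) \<lambda>(i,j), and hence \<Sum>_j \<lambda>(i-1,j)^2 \<le> \<Sum>_j \<lambda>(i,j)^2;
  the proximal term \<epsilon> U_[p-1] does no harm because \<langle>Q, U_[p-1]\<rangle> \<le> \<langle>U_[p-1], U_[p-1]\<rangle>
  for every Stiefel matrix Q. A normalised power step maximises |\<langle>u, v\<rangle>| over unit
  vectors u. So f decreases only through truncation, by less than \<kappa>^2 per deleted column:
  f(U_[p]) \<ge> f(U_[0]) - (r - t_p) \<kappa>^2 > t_p \<kappa>^2, as r \<kappa>^2 < f(U_[0]).
  Thus t_p > 0, and t_p, which never increases, is eventually constant; from then on f is
  nondecreasing.
\<close>

lemma contr_cong: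
  assumes "\<And>m. m < k \<Longrightarrow> u m = v m"
  shows "contr k n A u = contr k n A v"
  unfolding contr_def
  by (intro sum.cong refl arg_cong2[where f = "(*)"] prod.cong) (auto simp: assms)

lemma contr_i_cong:
  assumes "\<And>m. m \<noteq> i \<Longrightarrow> u m = v m"
  shows "contr_i k n A i u = contr_i k n A i v"
  unfolding contr_i_def
  by (intro ext if_cong sum.cong refl arg_cong2[where f = "(*)"] prod.cong) (auto simp: assms)

lemma contr_eq_sum_contr_i:
  assumes "i < k"
  shows "contr k n A u = (\<Sum>l<n i. u i l * contr_i k n A i u l)"
proof -
  have fin: "finite (idxs k n)"
    unfolding idxs_def by (simp add: finite_PiE)
  have mode_i: "(\<lambda>idx. idx i) ` idxs k n \<subseteq> {..<n i}"
    using assms unfolding idxs_def by (auto simp: PiE_iff)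
  have split_prod: "(\<Prod>m<k. u m (idx m)) = u i (idx i) * (\<Prod>m\<in>{..<k}-{i}. u m (idx m))" for idx
    using assms by (subst prod.remove[of _ i]) auto
  have "contr k n A u
      = (\<Sum>l<n i. \<Sum>idx\<in>{idx\<in>idxs k n. idx i = l}. A idx * (\<Prod>m<k. u m (idx m)))"
    unfolding contr_def using sum.group[OF fin finite_lessThan mode_i, symmetric] by simp
  also have "\<dots> = (\<Sum>l<n i. u i l * contr_i k n A i u l)"
    unfolding contr_i_def split_prod by (simp add: sum_distrib_left ac_simps)
  finally show ?thesis .
qed

lemma lam_eq_inner_old_column:
  assumes "i < k"
  shows "lam k n A U (Suc p) i j = (\<Sum>l<n i. U p i j l * Vcol k n A U (Suc p) i j l)"
  unfolding lam_def Vcol_def using assms by (subst contr_eq_sum_contr_i[of i k]) (auto simp: xv_def)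

lemma lam_Suc_eq_inner_new_column:
  assumes "i < k"
  shows "lam k n A U p (Suc i) j = (\<Sum>l<n i. U p i j l * Vcol k n A U p i j l)"
proof -
  \<comment> \<open>the two points differ only in mode i, which the partial contraction in mode i ignores\<close>
  have "contr_i k n A i (xv U p (Suc i) j) = contr_i k n A i (xv U p i j)"
    by (rule contr_i_cong) (auto simp: xv_def)
  then show ?thesis
    unfolding lam_def Vcol_def using assms by (subst contr_eq_sum_contr_i[of i k]) (auto simp: xv_def)
qed

lemma fobj_eq_sum_lam_first_mode:
  "fobj k n A T (U p) = (\<Sum>j\<in>T. (lam k n A U (Suc p) 0 j)\<^sup>2)"
proof -
  have "xv U (Suc p) 0 j = (\<lambda>m. U p m j)" for j
    by (simp add: xv_def)
  then show ?thesis
    unfolding fobj_def lam_def by simp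
qed

lemma fobj_eq_sum_lam_last_mode:
  "fobj k n A T (U p) = (\<Sum>j\<in>T. (lam k n A U p k j)\<^sup>2)"
proof -
  have "contr k n A (xv U p k j) = contr k n A (\<lambda>m. U p m j)" for j
    by (rule contr_cong) (simp add: xv_def)
  then show ?thesis
    unfolding fobj_def lam_def by simp
qed

lemma frob_Xmat:
  "frob (n i) T Q (Xmat k n A U p i)
     = (\<Sum>j\<in>T. lam k n A U p i j * (\<Sum>l<n i. Q j l * Vcol k n A U p i j l))"
  unfolding frob_def Xmat_def by (simp add: sum_distrib_left ac_simps)

lemma frob_add_scaled:
  "frob m T Q (\<lambda>j l. X j l + e * Y j l) = frob m T Q X + e * frob m T Q Y"
  unfolding frob_def by (simp add: algebra_simps sum.distrib sum_distrib_left)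

lemma stiefel_subset: "stiefel m T Q \<Longrightarrow> T' \<subseteq> T \<Longrightarrow> stiefel m T' Q"
  unfolding stiefel_def by blast

lemma stiefel_frob_le:
  assumes "stiefel m T Q" "stiefel m T Q'"
  shows "frob m T Q' Q \<le> frob m T Q Q"
  unfolding frob_def
proof (rule sum_mono)
  fix j assume j: "j \<in> T"
  have unit: "(\<Sum>l<m. (Q j l)\<^sup>2) = 1" "(\<Sum>l<m. (Q' j l)\<^sup>2) = 1"
    using assms j unfolding stiefel_def by (simp_all add: power2_eq_square)
  have "(\<Sum>l<m. Q' j l * Q j l)\<^sup>2 \<le> 1\<^sup>2"
    using Cauchy_Schwarz_ineq_sum[of "Q' j" "Q j" "{..<m}"] unit by simp
  then have "(\<Sum>l<m. Q' j l * Q j l) \<le> 1"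
    by (simp add: abs_square_le_1)
  then show "(\<Sum>l<m. Q' j l * Q j l) \<le> (\<Sum>l<m. Q j l * Q j l)"
    using unit by (simp add: power2_eq_square)
qed

lemma Polar_proximal_frob_ge:
  assumes Q0: "stiefel m T Q0" and "0 \<le> e"
    and Q: "Q \<in> Polar m T X \<or> Q \<in> Polar m T (\<lambda>j l. X j l + e * Q0 j l)"
  shows "frob m T Q0 X \<le> frob m T Q X"
  using Q
proof
  assume "Q \<in> Polar m T X"
  then show ?thesis using Q0 unfolding Polar_def by blast
next
  assume Q: "Q \<in> Polar m T (\<lambda>j l. X j l + e * Q0 j l)"
  then have "frob m T Q0 X + e * frob m T Q0 Q0 \<le> frob m T Q X + e * frob m T Q Q0"
    using Q0 unfolding Polar_def frob_add_scaled by blast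
  moreover have "e * frob m T Q Q0 \<le> e * frob m T Q0 Q0"
    using Q Q0 \<open>0 \<le> e\<close> unfolding Polar_def by (simp add: mult_left_mono stiefel_frob_le)
  ultimately show ?thesis by linarith
qed

lemma sum_squares_le_of_le_sum_mult:
  fixes a b :: "'a \<Rightarrow> real"
  assumes "(\<Sum>j\<in>T. (a j)\<^sup>2) \<le> (\<Sum>j\<in>T. a j * b j)"
  shows "(\<Sum>j\<in>T. (a j)\<^sup>2) \<le> (\<Sum>j\<in>T. (b j)\<^sup>2)"
proof -
  have "2 * (\<Sum>j\<in>T. a j * b j) \<le> (\<Sum>j\<in>T. (a j)\<^sup>2) + (\<Sum>j\<in>T. (b j)\<^sup>2)"
    unfolding sum_distrib_left sum.distrib[symmetric]
    by (rule sum_mono) (simp add: mult.assoc[symmetric] sum_squares_bound)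
  with assms show ?thesis by linarith
qed

lemma sum_squares_normalized_le_1:
  assumes "\<forall>l<m. w l = \<sigma> * v l / vnorm m v" "\<bar>\<sigma>\<bar> \<le> 1"
  shows "(\<Sum>l<m. (w l)\<^sup>2) \<le> 1"
proof -
  define W where "W = (\<Sum>l<m. (v l)\<^sup>2)"
  have "W \<ge> 0" unfolding W_def by (simp add: sum_nonneg)
  then have "(\<Sum>l<m. (w l)\<^sup>2) = \<sigma>\<^sup>2 * W / W"
    using assms(1) unfolding W_def vnorm_def
    by (simp add: power_divide power_mult_distrib sum_divide_distrib sum_distrib_left)
  also have "\<dots> \<le> 1"
    using assms(2) by (simp add: abs_le_square_iff[of \<sigma> 1, simplified])
  finally show ?thesis .
qed

lemma sgn_normalized_maximizes_inner:
  assumes u: "(\<Sum>l<m. (u l)\<^sup>2) \<le> 1"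
    and w: "\<forall>l<m. w l = sgn (\<Sum>l<m. u l * v l) * v l / vnorm m v"
  shows "(\<Sum>l<m. u l * v l)\<^sup>2 \<le> (\<Sum>l<m. w l * v l)\<^sup>2"
proof -
  define W where "W = (\<Sum>l<m. (v l)\<^sup>2)"
  define L where "L = (\<Sum>l<m. u l * v l)"
  have "W \<ge> 0" unfolding W_def by (simp add: sum_nonneg)
  have CS: "L\<^sup>2 \<le> W"
    using Cauchy_Schwarz_ineq_sum[of u v "{..<m}"] u \<open>W \<ge> 0\<close> unfolding L_def W_def
    by (meson mult_left_le_one_le order_trans zero_le_power2 sum_nonneg)
  have "(\<Sum>l<m. w l * v l) = (\<Sum>l<m. sgn L * (v l)\<^sup>2 / sqrt W)"
    using w unfolding L_def W_def vnorm_def by (intro sum.cong) (auto simp: power2_eq_square)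
  also have "\<dots> = sgn L * W / sqrt W"
    unfolding W_def by (simp add: sum_divide_distrib sum_distrib_left)
  finally have inner_w: "(\<Sum>l<m. w l * v l) = sgn L * W / sqrt W" .
  have "L\<^sup>2 \<le> (\<Sum>l<m. w l * v l)\<^sup>2"
  proof (cases "L = 0")
    case False
    then have "(sgn L * W / sqrt W)\<^sup>2 = W"
      using CS \<open>W \<ge> 0\<close> by (simp add: power_divide power_mult_distrib sgn_if power2_eq_square)
    with CS inner_w show ?thesis by simp
  qed simp
  then show ?thesis unfolding L_def .
qed

lemma decreasing_finite_sets_stabilize:
  assumes "finite (S 0)" and "\<And>q. S (Suc q) \<subseteq> S q"
  obtains N where "\<And>p. N \<le> p \<Longrightarrow> S p = S N"
proof -
  have dec: "decseq S"
    using assms(2) by (rule decseq_SucI)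
  have fin: "finite (S q)" for q
    using finite_subset[OF decseqD[OF dec le0] assms(1)] .
  obtain N where N: "card (S N) \<le> card (S q)" for q
    using ex_has_least_nat[of "\<lambda>_. True" 0 "\<lambda>q. card (S q)"] by auto
  have "S p = S N" if "N \<le> p" for p
  proof -
    have sub: "S p \<subseteq> S N"
      using dec that by (rule decseqD)
    with N[of p] have "card (S p) = card (S N)"
      using card_mono[OF fin sub] by simp
    with sub show ?thesis
      using card_subset_eq[OF fin] by blast
  qed
  with that show thesis .
qed

lemma iAPD_ALS_init:
  assumes "iAPD_ALS k s n A r \<epsilon> \<kappa> S U"
  shows "S 0 = {..<r}"
    and "i < s \<Longrightarrow> stiefel (n i) {..<r} (U 0 i)"
    and "s \<le> i \<Longrightarrow> i < k \<Longrightarrow> unitcols (n i) {..<r} (U 0 i)"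
    and "real r * \<kappa>\<^sup>2 < fobj k n A (S 0) (U 0)"
proof -
  show "S 0 = {..<r}"
    and "i < s \<Longrightarrow> stiefel (n i) {..<r} (U 0 i)"
    and "s \<le> i \<Longrightarrow> i < k \<Longrightarrow> unitcols (n i) {..<r} (U 0 i)"
    using assms unfolding iAPD_ALS_def by auto
  have "0 < \<kappa>" and \<kappa>: "\<kappa> < sqrt (fobj k n A (S 0) (U 0) / real r)"
    using assms unfolding iAPD_ALS_def by auto
  then have "r > 0"
    by (cases "r = 0") auto
  have "sqrt (\<kappa>\<^sup>2) < sqrt (fobj k n A (S 0) (U 0) / real r)"
    using \<kappa> \<open>0 < \<kappa>\<close> by simp
  then have "\<kappa>\<^sup>2 < fobj k n A (S 0) (U 0) / real r"
    by (simp only: real_sqrt_less_iff)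
  with \<open>r > 0\<close> show "real r * \<kappa>\<^sup>2 < fobj k n A (S 0) (U 0)"
    by (simp add: field_simps)
qed

lemma iAPD_ALS_iteration:
  assumes "iAPD_ALS k s n A r \<epsilon> \<kappa> S U"
  obtains "\<forall>i<s.
           (U (Suc p) i \<in> Polar (n i) (S p) (Xmat k n A U (Suc p) i) \<and>
            \<not> min_eig (S p) (gram (n i) (U (Suc p) i) (Xmat k n A U (Suc p) i)) < \<epsilon>)
         \<or> (\<exists>Q\<in>Polar (n i) (S p) (Xmat k n A U (Suc p) i).
              min_eig (S p) (gram (n i) Q (Xmat k n A U (Suc p) i)) < \<epsilon> \<and>
              U (Suc p) i \<in> Polar (n i) (S p)
                 (\<lambda>j l. Xmat k n A U (Suc p) i j l + \<epsilon> * U p i j l))"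
    "S (Suc p) = {j\<in>S p.
           \<not> \<bar>\<Sum>l<n (s - 1). U (Suc p) (s - 1) j l * Vcol k n A U (Suc p) (s - 1) j l\<bar> < \<kappa>}"
    "\<forall>i. s \<le> i \<and> i < k \<longrightarrow> (\<forall>j\<in>S (Suc p). \<forall>l<n i.
       U (Suc p) i j l = sgn (lam k n A U (Suc p) i j) * Vcol k n A U (Suc p) i j l
                           / vnorm (n i) (Vcol k n A U (Suc p) i j))"
proof -
  have "1 \<le> Suc p" by simp
  note step = assms[unfolded iAPD_ALS_def, THEN conjunct2, THEN conjunct2, THEN conjunct2,
      THEN conjunct2, THEN conjunct2, THEN conjunct2, THEN spec, THEN mp, OF this]
  show thesis
    using that step[unfolded diff_Suc_1] by blast
qed

lemma iAPD_ALS_polar_step: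
  assumes "iAPD_ALS k s n A r \<epsilon> \<kappa> S U" "i < s"
  shows "U (Suc p) i \<in> Polar (n i) (S p) (Xmat k n A U (Suc p) i) \<or>
         U (Suc p) i \<in> Polar (n i) (S p) (\<lambda>j l. Xmat k n A U (Suc p) i j l + \<epsilon> * U p i j l)"
  by (rule iAPD_ALS_iteration[OF assms(1), of p]) (use assms(2) in blast)

lemma iAPD_ALS_truncation:
  assumes "iAPD_ALS k s n A r \<epsilon> \<kappa> S U"
  shows "S (Suc p) = {j\<in>S p.
           \<not> \<bar>\<Sum>l<n (s - 1). U (Suc p) (s - 1) j l * Vcol k n A U (Suc p) (s - 1) j l\<bar> < \<kappa>}"
  by (rule iAPD_ALS_iteration[OF assms, of p])

lemma iAPD_ALS_power_step:
  assumes "iAPD_ALS k s n A r \<epsilon> \<kappa> S U" "s \<le> i" "i < k" "j \<in> S (Suc p)"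
  shows "\<forall>l<n i. U (Suc p) i j l = sgn (lam k n A U (Suc p) i j) * Vcol k n A U (Suc p) i j l
                                    / vnorm (n i) (Vcol k n A U (Suc p) i j)"
  by (rule iAPD_ALS_iteration[OF assms(1), of p]) (use assms(2-4) in blast)

lemma iAPD_ALS_columns_Suc_subset:
  "iAPD_ALS k s n A r \<epsilon> \<kappa> S U \<Longrightarrow> S (Suc p) \<subseteq> S p"
  by (subst iAPD_ALS_truncation) auto

lemma iAPD_ALS_columns_subset:
  assumes "iAPD_ALS k s n A r \<epsilon> \<kappa> S U"
  shows "S p \<subseteq> {..<r}"
proof -
  have "decseq S"
    by (rule decseq_SucI) (rule iAPD_ALS_columns_Suc_subset[OF assms])
  then show ?thesis
    using decseqD[of S 0 p] by (simp add: iAPD_ALS_init(1)[OF assms])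
qed

lemma iAPD_ALS_finite_columns:
  "iAPD_ALS k s n A r \<epsilon> \<kappa> S U \<Longrightarrow> finite (S p)"
  using finite_subset[OF iAPD_ALS_columns_subset] by blast

lemma iAPD_ALS_stiefel:
  assumes "iAPD_ALS k s n A r \<epsilon> \<kappa> S U" "i < s"
  shows "stiefel (n i) (S p) (U p i)"
proof (cases p)
  case 0
  then show ?thesis using iAPD_ALS_init(1,2)[OF assms(1)] assms(2) by simp
next
  case (Suc q)
  have "stiefel (n i) (S q) (U p i)"
    using iAPD_ALS_polar_step[OF assms, of q] Suc unfolding Polar_def by blast
  then show ?thesis
    using stiefel_subset iAPD_ALS_columns_Suc_subset[OF assms(1), of q] Suc by blast
qed

lemma iAPD_ALS_unit_columns:
  assumes "iAPD_ALS k s n A r \<epsilon> \<kappa> S U" "s \<le> i" "i < k" "j \<in> S p"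
  shows "(\<Sum>l<n i. (U p i j l)\<^sup>2) \<le> 1"
proof (cases p)
  case 0
  then show ?thesis
    using iAPD_ALS_init(1,3)[OF assms(1)] assms(2-4) unfolding unitcols_def by simp
next
  case (Suc q)
  then show ?thesis
    using iAPD_ALS_power_step[OF assms(1-3), of j q] assms(4)
    by (intro sum_squares_normalized_le_1) (auto simp: abs_sgn_eq)
qed

lemma iAPD_ALS_polar_mode_mono:
  assumes alg: "iAPD_ALS k s n A r \<epsilon> \<kappa> S U" and "0 \<le> \<epsilon>" "i < s" "s \<le> k"
  shows "(\<Sum>j\<in>S p. (lam k n A U (Suc p) i j)\<^sup>2) \<le> (\<Sum>j\<in>S p. (lam k n A U (Suc p) (Suc i) j)\<^sup>2)"
proof (rule sum_squares_le_of_le_sum_mult)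
  have "i < k" using assms by simp
  have "frob (n i) (S p) (U p i) (Xmat k n A U (Suc p) i)
        \<le> frob (n i) (S p) (U (Suc p) i) (Xmat k n A U (Suc p) i)"
    using iAPD_ALS_stiefel[OF alg \<open>i < s\<close>] \<open>0 \<le> \<epsilon>\<close> iAPD_ALS_polar_step[OF alg \<open>i < s\<close>]
    by (rule Polar_proximal_frob_ge)
  then show "(\<Sum>j\<in>S p. (lam k n A U (Suc p) i j)\<^sup>2)
      \<le> (\<Sum>j\<in>S p. lam k n A U (Suc p) i j * lam k n A U (Suc p) (Suc i) j)"
    unfolding frob_Xmat lam_Suc_eq_inner_new_column[OF \<open>i < k\<close>]
    by (simp add: lam_eq_inner_old_column[OF \<open>i < k\<close>, symmetric] power2_eq_square)
qed

lemma iAPD_ALS_power_mode_mono: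
  assumes alg: "iAPD_ALS k s n A r \<epsilon> \<kappa> S U" and "s \<le> i" "i < k" "j \<in> S (Suc p)"
  shows "(lam k n A U (Suc p) i j)\<^sup>2 \<le> (lam k n A U (Suc p) (Suc i) j)\<^sup>2"
  unfolding lam_eq_inner_old_column[OF \<open>i < k\<close>] lam_Suc_eq_inner_new_column[OF \<open>i < k\<close>]
proof (rule sgn_normalized_maximizes_inner)
  show "(\<Sum>l<n i. (U p i j l)\<^sup>2) \<le> 1"
    using assms iAPD_ALS_columns_Suc_subset[OF alg] by (blast intro: iAPD_ALS_unit_columns)
  show "\<forall>l<n i. U (Suc p) i j l = sgn (\<Sum>l<n i. U p i j l * Vcol k n A U (Suc p) i j l)
      * Vcol k n A U (Suc p) i j l / vnorm (n i) (Vcol k n A U (Suc p) i j)"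
    using iAPD_ALS_power_step[OF assms] by (simp add: lam_eq_inner_old_column[OF \<open>i < k\<close>])
qed

lemma iAPD_ALS_truncated_lam:
  assumes alg: "iAPD_ALS k s n A r \<epsilon> \<kappa> S U" and "1 \<le> s" "s \<le> k" "j \<in> S p - S (Suc p)"
  shows "(lam k n A U (Suc p) s j)\<^sup>2 \<le> \<kappa>\<^sup>2"
proof -
  have "s - 1 < k" and "Suc (s - 1) = s" using assms by auto
  then have "lam k n A U (Suc p) s j
      = (\<Sum>l<n (s - 1). U (Suc p) (s - 1) j l * Vcol k n A U (Suc p) (s - 1) j l)"
    using lam_Suc_eq_inner_new_column[of "s - 1" k n A U "Suc p" j] by simp
  then have "\<bar>lam k n A U (Suc p) s j\<bar> < \<kappa>"
    using assms(4) iAPD_ALS_truncation[OF alg, of p] by auto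
  then have "\<bar>lam k n A U (Suc p) s j\<bar> \<le> \<bar>\<kappa>\<bar>"
    by linarith
  then show ?thesis
    by (simp add: abs_le_square_iff)
qed

lemma iAPD_ALS_fobj_step:
  assumes alg: "iAPD_ALS k s n A r \<epsilon> \<kappa> S U" and "0 \<le> \<epsilon>" "1 \<le> s" "s \<le> k"
  shows "fobj k n A (S p) (U p)
    \<le> fobj k n A (S (Suc p)) (U (Suc p)) + real (card (S p - S (Suc p))) * \<kappa>\<^sup>2"
proof -
  let ?L = "lam k n A U (Suc p)"
  have sub: "S (Suc p) \<subseteq> S p"
    using alg by (rule iAPD_ALS_columns_Suc_subset)
  have "finite (S p)"
    using alg by (rule iAPD_ALS_finite_columns)
  have "fobj k n A (S p) (U p) = (\<Sum>j\<in>S p. (?L 0 j)\<^sup>2)"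
    by (rule fobj_eq_sum_lam_first_mode)
  also have "\<dots> \<le> (\<Sum>j\<in>S p. (?L s j)\<^sup>2)"
  proof (rule lift_Suc_mono_le_ivl[where f = "\<lambda>i. \<Sum>j\<in>S p. (?L i j)\<^sup>2" and N = "{..<s}"])
    show "(\<Sum>j\<in>S p. (?L i j)\<^sup>2) \<le> (\<Sum>j\<in>S p. (?L (Suc i) j)\<^sup>2)" if "i \<in> {..<s}" for i
      using iAPD_ALS_polar_mode_mono[OF alg \<open>0 \<le> \<epsilon>\<close> _ \<open>s \<le> k\<close>] that by blast
  qed auto
  also have "\<dots> = (\<Sum>j\<in>S p - S (Suc p). (?L s j)\<^sup>2) + (\<Sum>j\<in>S (Suc p). (?L s j)\<^sup>2)"
    using sub \<open>finite (S p)\<close> by (rule sum.subset_diff)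
  also have "\<dots> \<le> real (card (S p - S (Suc p))) * \<kappa>\<^sup>2 + (\<Sum>j\<in>S (Suc p). (?L k j)\<^sup>2)"
  proof (rule add_mono)
    show "(\<Sum>j\<in>S p - S (Suc p). (?L s j)\<^sup>2) \<le> real (card (S p - S (Suc p))) * \<kappa>\<^sup>2"
      using iAPD_ALS_truncated_lam[OF assms(1,3,4)] by (rule sum_bounded_above)
    show "(\<Sum>j\<in>S (Suc p). (?L s j)\<^sup>2) \<le> (\<Sum>j\<in>S (Suc p). (?L k j)\<^sup>2)"
    proof (rule lift_Suc_mono_le_ivl[where f = "\<lambda>i. \<Sum>j\<in>S (Suc p). (?L i j)\<^sup>2"
          and N = "{s..<k}"])
      show "(\<Sum>j\<in>S (Suc p). (?L i j)\<^sup>2) \<le> (\<Sum>j\<in>S (Suc p). (?L (Suc i) j)\<^sup>2)"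
        if "i \<in> {s..<k}" for i
        using iAPD_ALS_power_mode_mono[OF alg] that by (simp add: sum_mono)
    qed (use \<open>s \<le> k\<close> in auto)
  qed
  also have "\<dots> = real (card (S p - S (Suc p))) * \<kappa>\<^sup>2 + fobj k n A (S (Suc p)) (U (Suc p))"
    by (simp add: fobj_eq_sum_lam_last_mode)
  finally show ?thesis by simp
qed

lemma iAPD_ALS_fobj_lower_bound:
  assumes alg: "iAPD_ALS k s n A r \<epsilon> \<kappa> S U" and "0 \<le> \<epsilon>" "1 \<le> s" "s \<le> k"
  shows "fobj k n A (S 0) (U 0) \<le> fobj k n A (S p) (U p) + (real r - real (card (S p))) * \<kappa>\<^sup>2"
proof (induction p)
  case 0
  show ?case by (simp add: iAPD_ALS_init(1)[OF alg])
next
  case (Suc p)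
  have sub: "S (Suc p) \<subseteq> S p"
    using alg by (rule iAPD_ALS_columns_Suc_subset)
  have "finite (S p)"
    using alg by (rule iAPD_ALS_finite_columns)
  then have "real (card (S p - S (Suc p))) = real (card (S p)) - real (card (S (Suc p)))"
    using sub by (simp add: card_Diff_subset finite_subset card_mono of_nat_diff)
  with Suc.IH iAPD_ALS_fobj_step[OF assms, of p] show ?case
    by (simp add: algebra_simps)
qed

lemma iAPD_ALS_columns_nonempty:
  assumes alg: "iAPD_ALS k s n A r \<epsilon> \<kappa> S U" and "0 \<le> \<epsilon>" "1 \<le> s" "s \<le> k"
  shows "S p \<noteq> {}"
proof
  assume "S p = {}"
  then have "fobj k n A (S 0) (U 0) \<le> real r * \<kappa>\<^sup>2"
    using iAPD_ALS_fobj_lower_bound[OF assms, of p] by (simp add: fobj_def)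
  with iAPD_ALS_init(4)[OF alg] show False by simp
qed

theorem proposition5p5:
  fixes k s r :: nat and n :: "nat \<Rightarrow> nat" and A :: "(nat \<Rightarrow> nat) \<Rightarrow> real"
    and \<epsilon> \<kappa> :: real
    and S :: "nat \<Rightarrow> nat set" and U :: "nat \<Rightarrow> nat \<Rightarrow> nat \<Rightarrow> nat \<Rightarrow> real"
  assumes "k \<ge> 3" and "1 \<le> s" and "s \<le> k"
    and "\<forall>i<k. n i \<ge> 1"
    and "\<forall>i<s. r \<le> n i"
    and "\<exists>idx\<in>idxs k n. A idx \<noteq> 0"
    and "\<epsilon> > 0"
    and "iAPD_ALS k s n A r \<epsilon> \<kappa> S U"
  shows "(\<exists>t N. 0 < t \<and> t \<le> r \<and> (\<forall>p\<ge>N. card (S p) = t)) \<and>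
         (\<exists>N0. \<forall>p\<ge>N0. fobj k n A (S p) (U p) \<le> fobj k n A (S (Suc p)) (U (Suc p)))"
proof -
  note alg = \<open>iAPD_ALS k s n A r \<epsilon> \<kappa> S U\<close>
  have "0 \<le> \<epsilon>" using \<open>\<epsilon> > 0\<close> by simp
  have fin: "finite (S p)" for p
    using alg by (rule iAPD_ALS_finite_columns)
  obtain N where N: "\<And>p. N \<le> p \<Longrightarrow> S p = S N"
    using decreasing_finite_sets_stabilize[of S, OF fin iAPD_ALS_columns_Suc_subset[OF alg]] by blast
  have "0 < card (S N)"
    using iAPD_ALS_columns_nonempty[OF alg \<open>0 \<le> \<epsilon>\<close> \<open>1 \<le> s\<close> \<open>s \<le> k\<close>] fin
    by (simp add: card_gt_0_iff)
  moreover have "card (S N) \<le> r"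
    using card_mono[OF _ iAPD_ALS_columns_subset[OF alg]] by simp
  moreover have "fobj k n A (S p) (U p) \<le> fobj k n A (S (Suc p)) (U (Suc p))" if "N \<le> p" for p
    using iAPD_ALS_fobj_step[OF alg \<open>0 \<le> \<epsilon>\<close> \<open>1 \<le> s\<close> \<open>s \<le> k\<close>, of p] N[OF that] N[of "Suc p"] that
    by simp
  ultimately show ?thesis
    using N by metis
qed

end
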